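(* Let $T>0$ and $v(t,x)=a(x)w(t,x)$ on $\Omega_T:=[0,T)\times(0,\infty)$, where: (A1) there is $K>0$ with $|v(t,x)|\le K(1+x)$ on $\Omega_T$; (A2) $\partial_xv\in L^\infty((0,T)\times(1/R,\infty))$ for all $R>0$; (A3) $a\in\mathcal C^0([0,\infty))\cap\mathcal C^1(0,\infty)$, $a(x)>0$ for $x>0$; (A4) $w\in\mathcal C^0([0,T)\times[0,\infty))$, $\partial_xw\in\mathcal C^0((0,T)\times(0,\infty))\cap L^\infty((0,T)\times(1/R,R))$ for all $R>0$; (A5) $1/a\in L^1(0,1)$ and $\int_0^x dy/a(y)\to+\infty$ as $x\to\infty$; (A6) $\partial_xw\in L^1((0,T)\times(0,1))$; (A7) there exist $\delta>0$, $x_0>0$ with $w\ge\delta$ on $[0,T)\times(0,x_0)$. Then for each $t\in(0,T)$: (1) $x_c(t)$ is finite and positive; (2) $\sigma_t$ is a nonincreasing map which is positive on $(0,x_c(t))$; (3) $\sigma_t$ vanishes on $(x_c(t),\infty)$. Moreover, $x_c(0)=0$ and $\sigma_0$ is identically zero.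
   Context: For $(t,x)\in\Omega_T$, $s\mapsto X(s;t,x)$ denotes the unique maximal solution, with values in $(0,\infty)$ and maximal interval $\Sigma_{t,x}\subset[0,T)$, of $\partial_sX(s;t,x)=v(s,X(s;t,x))$, $X(t;t,x)=x$. Define $\sigma_t(x):=\inf\Sigma_{t,x}$ and $x_c(t):=\inf\{x>0:\sigma_t(x)=0\}$. *)

theory Defs
  imports "HOL-Analysis.Analysis"
begin

definition char_sol ::
  "(real \<Rightarrow> real \<Rightarrow> real) \<Rightarrow> real \<Rightarrow> real \<Rightarrow> real \<Rightarrow> real set \<Rightarrow> (real \<Rightarrow> real) \<Rightarrow> bool" where
  "char_sol v T t x J Y \<longleftrightarrow>
     is_interval J \<and> J \<subseteq> {0..<T} \<and> t \<in> J \<and> Y t = x \<and>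
     (\<forall>s\<in>J. Y s > 0 \<and> (Y has_real_derivative v s (Y s)) (at s within J))"

definition max_char_sol ::
  "(real \<Rightarrow> real \<Rightarrow> real) \<Rightarrow> real \<Rightarrow> real \<Rightarrow> real \<Rightarrow> real set \<Rightarrow> (real \<Rightarrow> real) \<Rightarrow> bool" where
  "max_char_sol v T t x J Y \<longleftrightarrow>
     char_sol v T t x J Y \<and>
     (\<forall>J' Y'. char_sol v T t x J' Y' \<and> J \<subseteq> J' \<and> (\<forall>s\<in>J. Y' s = Y s) \<longrightarrow> J' = J)"

definition csigma :: "(real \<Rightarrow> real \<Rightarrow> real set) \<Rightarrow> real \<Rightarrow> real \<Rightarrow> real" where
  "csigma Sig t x = Inf (Sig t x)"

definition xc :: "(real \<Rightarrow> real \<Rightarrow> real set) \<Rightarrow> real \<Rightarrow> real" where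
  "xc Sig t = Inf {x. x > 0 \<and> csigma Sig t x = 0}"

end

theory Submission
  imports Defs
begin

text \<open>Characteristics are unique while they stay in a compact part of \<open>(0, \<infinity>)\<close>, where \<open>v\<close>
  is Lipschitz, and the growth bound \<open>\<bar>v\<bar> \<le> K (1 + x)\<close> keeps \<open>1 + X(s; t, x)\<close> between
  \<open>(1 + x) e\<^sup>-\<^sup>K\<^sup>T\<close> and \<open>(1 + x) e\<^sup>K\<^sup>T\<close>. Hence a maximal characteristic that stays away from \<open>0\<close>
  lives back to time \<open>0\<close>: otherwise a Picard step, whose length depends only on these bounds,
  would extend it below its initial time. For \<open>x = 2 e\<^sup>K\<^sup>T\<close> the characteristic stays above \<open>1\<close>,
  so \<open>\<sigma>\<^sub>t\<close> vanishes for large \<open>x\<close>; since characteristics do not cross, the one through a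
  larger point stays above the one through a smaller point, which makes \<open>\<sigma>\<^sub>t\<close> nonincreasing.
  Near \<open>0\<close>, \<open>G(x) = \<integral>\<^sub>0\<^sup>x dy / a(y)\<close> increases along characteristics at rate \<open>w \<ge> \<delta>\<close>, so the
  characteristic through a small \<open>x\<close> cannot be continued below time \<open>t - G(x) / \<delta> > 0\<close>.\<close>

lemma has_real_derivative_Icc_increment_ge:
  fixes f :: "real \<Rightarrow> real"
  assumes "p \<le> q"
    and deriv: "\<And>s. s \<in> {p..q} \<Longrightarrow> (f has_real_derivative f' s) (at s within {p..q})"
    and lower: "\<And>s. s \<in> {p<..<q} \<Longrightarrow> c \<le> f' s"
  shows "c * (q - p) \<le> f q - f p"
proof -
  have "f p - c * p \<le> f q - c * q"
  proof (rule DERIV_nonneg_imp_increasing_open[OF \<open>p \<le> q\<close>])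
    fix s assume s: "p < s" "s < q"
    then have "(f has_real_derivative f' s) (at s)"
      using deriv[of s] at_within_Icc_at[of p s q] by auto
    then have "((\<lambda>u. f u - c * u) has_real_derivative f' s - c) (at s)"
      by (auto intro!: derivative_eq_intros)
    then show "\<exists>y. ((\<lambda>u. f u - c * u) has_real_derivative y) (at s) \<and> 0 \<le> y"
      using lower[of s] s by auto
  next
    show "continuous_on {p..q} (\<lambda>u. f u - c * u)"
      using DERIV_continuous_on[OF deriv] by (intro continuous_intros)
  qed
  then show ?thesis
    by (simp add: algebra_simps)
qed

lemma increasing_on_Icc_if_deriv_nonneg:
  fixes G :: "real \<Rightarrow> real"
  assumes "continuous_on {a..b} G"
    and "\<And>y. y \<in> {a<..<b} \<Longrightarrow> (G has_real_derivative g y) (at y)"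
    and "\<And>y. y \<in> {a<..<b} \<Longrightarrow> 0 \<le> g y" and "y \<in> {a..b}"
  shows "G a \<le> G y"
proof (rule DERIV_nonneg_imp_increasing_open[of a y G])
  show "\<exists>D. (G has_real_derivative D) (at z) \<and> 0 \<le> D" if "a < z" "z < y" for z
    using assms(2,3)[of z] that \<open>y \<in> {a..b}\<close> by auto
  show "continuous_on {a..y} G"
    using \<open>y \<in> {a..b}\<close> by (intro continuous_on_subset[OF assms(1)]) auto
qed (use \<open>y \<in> {a..b}\<close> in auto)

lemma has_real_derivative_indefinite_integral:
  fixes f :: "real \<Rightarrow> real"
  assumes "f integrable_on {a..b}" "isCont f y" "y \<in> {a<..<b}"
  shows "((\<lambda>x. integral {a..x} f) has_real_derivative f y) (at y)"
proof -
  have "continuous (at y within {a..b} - {}) f"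
    using assms(2) by (rule continuous_at_imp_continuous_within)
  then have "((\<lambda>x. integral {a..x} f) has_vector_derivative f y) (at y within {a..b} - {})"
    using assms(1,3) by (intro integral_has_vector_derivative_continuous_at) auto
  moreover have "at y within {a..b} - {} = at y"
    using at_within_Icc_at[of a y b] assms(3) by simp
  ultimately show ?thesis
    by (simp add: has_real_derivative_iff_has_vector_derivative)
qed

lemma uniform_lipschitz_of_deriv_bound:
  fixes v :: "real \<Rightarrow> real \<Rightarrow> real"
  assumes diff: "\<And>t z. t \<in> S \<Longrightarrow> 0 < z \<Longrightarrow> (\<lambda>y. v t y) differentiable (at z)"
    and bound: "\<forall>R>0. \<exists>M. \<forall>t\<in>S. \<forall>x>1/R. \<bar>deriv (\<lambda>y. v t y) x\<bar> \<le> M"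
    and "0 < r"
  shows "\<exists>L\<ge>0. \<forall>t\<in>S. \<forall>x\<ge>r. \<forall>y\<ge>r. \<bar>v t x - v t y\<bar> \<le> L * \<bar>x - y\<bar>"
proof -
  obtain M where M: "\<forall>t\<in>S. \<forall>x>1 / (2 / r). \<bar>deriv (\<lambda>y. v t y) x\<bar> \<le> M"
    using bound[rule_format, of "2 / r"] \<open>0 < r\<close> by auto
  have "\<bar>v t x - v t y\<bar> \<le> \<bar>M\<bar> * \<bar>x - y\<bar>" if "t \<in> S" "r \<le> x" "r \<le> y" for t x y
  proof -
    have "norm (v t x - v t y) \<le> \<bar>M\<bar> * norm (x - y)"
    proof (rule field_differentiable_bound[of "{r..}" _ "deriv (\<lambda>y. v t y)"])
      show "((\<lambda>y. v t y) has_field_derivative deriv (\<lambda>y. v t y) z) (at z within {r..})"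
        if "z \<in> {r..}" for z
      proof -
        have "(\<lambda>y. v t y) differentiable (at z)"
          using diff[OF \<open>t \<in> S\<close>, of z] that \<open>0 < r\<close> by simp
        then show ?thesis
          by (simp add: DERIV_deriv_iff_real_differentiable has_field_derivative_at_within)
      qed
      show "norm (deriv (\<lambda>y. v t y) z) \<le> \<bar>M\<bar>" if "z \<in> {r..}" for z
      proof -
        have "1 / (2 / r) < z"
          using that \<open>0 < r\<close> by simp
        then show ?thesis
          using M \<open>t \<in> S\<close> by fastforce
      qed
    qed (use that in auto)
    then show ?thesis
      by simp
  qed
  then show ?thesis
    by (intro exI[of _ "\<bar>M\<bar>"]) auto
qed

lemma gronwall_exp_weighted_decreasing:
  fixes \<phi> :: "real \<Rightarrow> real"
  assumes "p \<le> q"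
    and deriv: "\<And>s. s \<in> {p..q} \<Longrightarrow> (\<phi> has_real_derivative \<phi>' s) (at s within {p..q})"
    and growth: "\<And>s. s \<in> {p<..<q} \<Longrightarrow> \<phi>' s \<le> C * \<phi> s"
  shows "\<phi> q * exp (- C * q) \<le> \<phi> p * exp (- C * p)"
proof -
  let ?\<psi> = "\<lambda>s. - (\<phi> s * exp (- C * s))"
  have "0 * (q - p) \<le> ?\<psi> q - ?\<psi> p"
  proof (rule has_real_derivative_Icc_increment_ge[OF \<open>p \<le> q\<close>])
    show "(?\<psi> has_real_derivative (C * \<phi> s - \<phi>' s) * exp (- C * s)) (at s within {p..q})"
      if "s \<in> {p..q}" for s
      using deriv[OF that] by (auto intro!: derivative_eq_intros simp: algebra_simps)
    show "0 \<le> (C * \<phi> s - \<phi>' s) * exp (- C * s)" if "s \<in> {p<..<q}" for s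
      using growth[OF that] by simp
  qed
  then show ?thesis
    by simp
qed

lemma nonneg_eq_0_if_abs_deriv_le:
  fixes \<phi> :: "real \<Rightarrow> real"
  assumes deriv: "\<And>s. s \<in> {p..q} \<Longrightarrow> (\<phi> has_real_derivative \<phi>' s) (at s within {p..q})"
    and bound: "\<And>s. s \<in> {p<..<q} \<Longrightarrow> \<bar>\<phi>' s\<bar> \<le> C * \<phi> s"
    and nonneg: "\<And>s. s \<in> {p..q} \<Longrightarrow> 0 \<le> \<phi> s"
    and zero: "u \<in> {p..q}" "\<phi> u = 0"
    and s: "s \<in> {p..q}"
  shows "\<phi> s = 0"
proof -
  have deriv_sub: "\<And>r. r \<in> {l..h} \<Longrightarrow> (\<phi> has_real_derivative \<phi>' r) (at r within {l..h})"
    if "{l..h} \<subseteq> {p..q}" for l h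
    using DERIV_subset[OF deriv] that by blast
  consider "u \<le> s" | "s < u" by linarith
  then have "\<phi> s \<le> 0"
  proof cases
    case 1
    have "\<phi> s * exp (- C * s) \<le> \<phi> u * exp (- C * u)"
    proof (rule gronwall_exp_weighted_decreasing[OF 1 deriv_sub])
      show "{u..s} \<subseteq> {p..q}"
        using zero s by auto
      show "\<phi>' r \<le> C * \<phi> r" if "r \<in> {u<..<s}" for r
        using bound[of r] zero s that by fastforce
    qed
    then show ?thesis
      using zero by (simp add: mult_le_0_iff)
  next
    case 2
    \<comment> \<open>backwards in time, apply the forward estimate to \<open>-\<phi>\<close> with constant \<open>-C\<close>\<close>
    have "- \<phi> u * exp (- (- C) * u) \<le> - \<phi> s * exp (- (- C) * s)"
    proof (rule gronwall_exp_weighted_decreasing[where \<phi>' = "\<lambda>r. - \<phi>' r"])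
      show "((\<lambda>r. - \<phi> r) has_real_derivative - \<phi>' r) (at r within {s..u})" if "r \<in> {s..u}" for r
        using deriv_sub[of s u] zero s that by (auto intro: DERIV_minus)
      show "- \<phi>' r \<le> - C * - \<phi> r" if "r \<in> {s<..<u}" for r
        using bound[of r] zero s that by auto
    qed (use 2 in auto)
    then show ?thesis
      using zero by (simp add: mult_le_0_iff)
  qed
  with nonneg[OF s] show ?thesis
    by simp
qed

lemma ode_solutions_eq_if_eq_at:
  fixes f :: "real \<Rightarrow> real \<Rightarrow> real"
  assumes Y: "\<And>s. s \<in> {p..q} \<Longrightarrow> (Y has_real_derivative f s (Y s)) (at s within {p..q})"
    and Z: "\<And>s. s \<in> {p..q} \<Longrightarrow> (Z has_real_derivative f s (Z s)) (at s within {p..q})"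
    and lipschitz: "\<And>s. s \<in> {p<..<q} \<Longrightarrow> \<bar>f s (Y s) - f s (Z s)\<bar> \<le> L * \<bar>Y s - Z s\<bar>"
    and "u \<in> {p..q}" "Y u = Z u" "s \<in> {p..q}"
  shows "Y s = Z s"
proof -
  have "(Y s - Z s)\<^sup>2 = 0"
  proof (rule nonneg_eq_0_if_abs_deriv_le
      [where \<phi> = "\<lambda>s. (Y s - Z s)\<^sup>2" and C = "2 * L"
        and \<phi>' = "\<lambda>s. 2 * (Y s - Z s) * (f s (Y s) - f s (Z s))"])
    show "((\<lambda>s. (Y s - Z s)\<^sup>2) has_real_derivative 2 * (Y r - Z r) * (f r (Y r) - f r (Z r)))
        (at r within {p..q})" if "r \<in> {p..q}" for r
      using Y[OF that] Z[OF that] by (auto intro!: derivative_eq_intros)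
    show "\<bar>2 * (Y r - Z r) * (f r (Y r) - f r (Z r))\<bar> \<le> 2 * L * (Y r - Z r)\<^sup>2"
      if "r \<in> {p<..<q}" for r
    proof -
      have "\<bar>2 * (Y r - Z r) * (f r (Y r) - f r (Z r))\<bar>
          = 2 * \<bar>Y r - Z r\<bar> * \<bar>f r (Y r) - f r (Z r)\<bar>"
        by (simp only: abs_mult abs_numeral)
      also have "\<dots> \<le> 2 * \<bar>Y r - Z r\<bar> * (L * \<bar>Y r - Z r\<bar>)"
        using lipschitz[OF that] by (intro mult_left_mono) auto
      also have "\<dots> = 2 * L * (Y r - Z r)\<^sup>2"
        by (simp add: power2_eq_square abs_mult_self algebra_simps)
      finally show ?thesis .
    qed
  qed (use assms in auto)
  then show ?thesis
    by simp
qed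

lemma has_real_derivative_glue_Icc:
  fixes Y Z :: "real \<Rightarrow> real"
  assumes "c \<in> J" "J \<subseteq> {c..}"
    and Z: "\<And>s. s \<in> {a..c} \<Longrightarrow> (Z has_real_derivative Z' s) (at s within {a..c})"
    and Y: "\<And>s. s \<in> J \<Longrightarrow> (Y has_real_derivative Y' s) (at s within J)"
    and "Z c = Y c" "Z' c = Y' c"
    and s: "s \<in> {a..c} \<union> J"
  shows "((\<lambda>s. if s \<in> {a..c} then Z s else Y s) has_real_derivative
      (if s \<in> {a..c} then Z' s else Y' s)) (at s within {a..c} \<union> J)"
proof -
  have "closure J \<subseteq> {c..}"
    using \<open>J \<subseteq> {c..}\<close> by (intro closure_minimal) auto
  then have meet: "closure {a..c} \<inter> closure J \<subseteq> {c}"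
    by (auto simp: closure_closed)
  then have cl_Icc: "{a..c} \<union> (closure {a..c} \<inter> closure J) = {a..c}"
    by (auto simp: closure_closed)
  from meet have cl_J: "J \<union> (closure {a..c} \<inter> closure J) = J"
    using \<open>c \<in> J\<close> by blast
  show ?thesis
    unfolding has_real_derivative_iff_has_vector_derivative
  proof (rule has_vector_derivative_If_within_closures[OF s refl])
    show "(Z has_vector_derivative Z' s) (at s within {a..c} \<union> (closure {a..c} \<inter> closure J))"
      if "s \<in> {a..c} \<union> (closure {a..c} \<inter> closure J)"
      using Z[of s] that unfolding cl_Icc by (simp add: has_real_derivative_iff_has_vector_derivative)
    show "(Y has_vector_derivative Y' s) (at s within J \<union> (closure {a..c} \<inter> closure J))"
      if "s \<in> J \<union> (closure {a..c} \<inter> closure J)"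
      using Y[of s] that unfolding cl_J by (simp add: has_real_derivative_iff_has_vector_derivative)
    show "Z s = Y s" "Z' s = Y' s" if "s \<in> closure {a..c}" "s \<in> closure J"
      using meet that \<open>Z c = Y c\<close> \<open>Z' c = Y' c\<close> by auto
  qed
qed

lemma antimono_zero_threshold:
  fixes \<sigma> :: "real \<Rightarrow> real"
  assumes antimono: "\<And>x y. 0 < x \<Longrightarrow> x \<le> y \<Longrightarrow> \<sigma> y \<le> \<sigma> x"
    and nonneg: "\<And>x. 0 < x \<Longrightarrow> 0 \<le> \<sigma> x"
    and pos: "0 < x1" "\<And>x. x \<in> {0<..<x1} \<Longrightarrow> 0 < \<sigma> x"
    and zero: "0 < z" "\<sigma> z = 0"
  shows "x1 \<le> Inf {x. 0 < x \<and> \<sigma> x = 0}"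
    and "\<And>x. x \<in> {0<..<Inf {x. 0 < x \<and> \<sigma> x = 0}} \<Longrightarrow> 0 < \<sigma> x"
    and "\<And>x. Inf {x. 0 < x \<and> \<sigma> x = 0} < x \<Longrightarrow> \<sigma> x = 0"
proof -
  let ?Z = "{x. 0 < x \<and> \<sigma> x = 0}"
  have "z \<in> ?Z"
    using zero by simp
  then have "?Z \<noteq> {}"
    by blast
  have "bdd_below ?Z"
    by (rule bdd_belowI[of _ 0]) simp
  show "x1 \<le> Inf ?Z"
  proof (rule cInf_greatest[OF \<open>?Z \<noteq> {}\<close>])
    fix y
    assume "y \<in> ?Z"
    then have "0 < y" "\<sigma> y = 0"
      by simp_all
    then show "x1 \<le> y"
      using pos(2)[of y] by (metis greaterThanLessThan_iff less_irrefl linorder_not_le)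
  qed
  show "0 < \<sigma> x" if x: "x \<in> {0<..<Inf ?Z}" for x
  proof -
    have "x \<notin> ?Z"
      using cInf_lower[OF _ \<open>bdd_below ?Z\<close>, of x] x by auto
    then have "\<sigma> x \<noteq> 0"
      using x by simp
    then show ?thesis
      using nonneg[of x] x by simp
  qed
  show "\<sigma> x = 0" if "Inf ?Z < x" for x
  proof -
    obtain y where "0 < y" "\<sigma> y = 0" "y < x"
      using cInf_less_iff[OF \<open>?Z \<noteq> {}\<close> \<open>bdd_below ?Z\<close>] \<open>Inf ?Z < x\<close> by auto
    then show ?thesis
      using antimono[of y x] nonneg[of x] by simp
  qed
qed

section \<open>Picard iteration\<close>

lemma continuous_on_compose_graph:
  assumes "continuous_on (S \<times> UNIV) (\<lambda>(s, y). F s y)" "continuous_on S g"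
  shows "continuous_on S (\<lambda>s. F s (g s))"
  using continuous_on_compose2[OF assms(1), of S "\<lambda>s. (s, g s)"] assms(2)
  by (auto simp: continuous_on_Pair continuous_on_id)

lemma integral_Icc_abs_le:
  fixes h :: "real \<Rightarrow> real"
  assumes "continuous_on {a..b} h" "\<And>\<tau>. \<tau> \<in> {a..b} \<Longrightarrow> \<bar>h \<tau>\<bar> \<le> C" "u \<in> {a..b}"
  shows "\<bar>integral {u..b} h\<bar> \<le> C * (b - a)"
proof -
  have "norm (integral {u..b} h) \<le> C * (b - u)"
    using assms by (intro integral_bound continuous_on_subset[OF assms(1)]) auto
  also have "\<dots> \<le> C * (b - a)"
    using assms(3) order_trans[OF abs_ge_zero assms(2)[OF assms(3)]] by (intro mult_left_mono) auto
  finally show ?thesis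
    by simp
qed

text \<open>Time is clamped to \<open>[a, b]\<close> so that a step maps bounded continuous functions on the
  whole real line to bounded continuous functions.\<close>

definition picard_step ::
  "real \<Rightarrow> real \<Rightarrow> real \<Rightarrow> (real \<Rightarrow> real \<Rightarrow> real) \<Rightarrow> (real \<Rightarrow> real) \<Rightarrow> real \<Rightarrow> real" where
  "picard_step a b y0 F g s = y0 - integral {max a (min b s)..b} (\<lambda>\<tau>. F \<tau> (g \<tau>))"

lemma picard_step_bcontfun:
  fixes g :: "real \<Rightarrow>\<^sub>C real"
  assumes "a \<le> b" and cont: "continuous_on ({a..b} \<times> UNIV) (\<lambda>(s, y). F s y)"
    and bounded: "\<And>s y. s \<in> {a..b} \<Longrightarrow> \<bar>F s y\<bar> \<le> B"
  shows "picard_step a b y0 F g \<in> bcontfun"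
proof (rule bcontfun_normI)
  have h: "continuous_on {a..b} (\<lambda>\<tau>. F \<tau> (g \<tau>))"
    by (rule continuous_on_compose_graph[OF cont]) simp
  have "continuous_on {a..b} (\<lambda>u. integral {u..b} (\<lambda>\<tau>. F \<tau> (g \<tau>)))"
    by (intro indefinite_integral_continuous_1' integrable_continuous_interval h)
  moreover have "continuous_on UNIV (\<lambda>s. max a (min b s))"
    by (intro continuous_intros)
  ultimately have "continuous_on UNIV (\<lambda>s. integral {max a (min b s)..b} (\<lambda>\<tau>. F \<tau> (g \<tau>)))"
    by (rule continuous_on_compose2) (use \<open>a \<le> b\<close> in auto)
  then show "continuous_on UNIV (picard_step a b y0 F g)"
    unfolding picard_step_def by (rule continuous_on_diff[OF continuous_on_const])
  show "norm (picard_step a b y0 F g s) \<le> \<bar>y0\<bar> + B * (b - a)" for s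
    using integral_Icc_abs_le[OF h bounded, of "max a (min b s)"] \<open>a \<le> b\<close>
    unfolding picard_step_def by auto
qed

lemma picard_step_contraction:
  fixes g1 g2 :: "real \<Rightarrow>\<^sub>C real"
  assumes "a \<le> b" and cont: "continuous_on ({a..b} \<times> UNIV) (\<lambda>(s, y). F s y)"
    and lipschitz: "\<And>s y z. s \<in> {a..b} \<Longrightarrow> \<bar>F s y - F s z\<bar> \<le> L * \<bar>y - z\<bar>" and "0 \<le> L"
  shows "dist (picard_step a b y0 F g1 s) (picard_step a b y0 F g2 s) \<le> (b - a) * L * dist g1 g2"
proof -
  let ?u = "max a (min b s)"
  have h: "continuous_on {a..b} (\<lambda>\<tau>. F \<tau> (g \<tau>))" for g :: "real \<Rightarrow>\<^sub>C real"
    by (rule continuous_on_compose_graph[OF cont]) simp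
  have "\<bar>F \<tau> (g2 \<tau>) - F \<tau> (g1 \<tau>)\<bar> \<le> L * dist g1 g2" if "\<tau> \<in> {a..b}" for \<tau>
  proof -
    have "\<bar>g2 \<tau> - g1 \<tau>\<bar> \<le> dist g1 g2"
      using dist_bounded[of g2 \<tau> g1] by (simp add: dist_real_def dist_commute)
    then show ?thesis
      using lipschitz[OF that, of "g2 \<tau>" "g1 \<tau>"] \<open>0 \<le> L\<close> by (meson mult_left_mono order_trans)
  qed
  then have "\<bar>integral {?u..b} (\<lambda>\<tau>. F \<tau> (g2 \<tau>) - F \<tau> (g1 \<tau>))\<bar> \<le> L * dist g1 g2 * (b - a)"
    using \<open>a \<le> b\<close> by (intro integral_Icc_abs_le continuous_on_diff h) auto
  moreover have "(\<lambda>\<tau>. F \<tau> (g \<tau>)) integrable_on {?u..b}" for g :: "real \<Rightarrow>\<^sub>C real"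
    using \<open>a \<le> b\<close> by (intro integrable_continuous_interval continuous_on_subset[OF h]) auto
  ultimately show ?thesis
    unfolding picard_step_def dist_real_def by (simp add: integral_diff algebra_simps)
qed

lemma ode_terminal_value_existence:
  fixes F :: "real \<Rightarrow> real \<Rightarrow> real"
  assumes "a \<le> b" and cont: "continuous_on ({a..b} \<times> UNIV) (\<lambda>(s, y). F s y)"
    and bounded: "\<And>s y. s \<in> {a..b} \<Longrightarrow> \<bar>F s y\<bar> \<le> B"
    and lipschitz: "\<And>s y z. s \<in> {a..b} \<Longrightarrow> \<bar>F s y - F s z\<bar> \<le> L * \<bar>y - z\<bar>"
    and "0 \<le> L" "(b - a) * L < 1"
  obtains Z where "Z b = y0" "\<And>s. s \<in> {a..b} \<Longrightarrow> \<bar>Z s - y0\<bar> \<le> B * (b - a)"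
    "\<And>s. s \<in> {a..b} \<Longrightarrow> (Z has_real_derivative F s (Z s)) (at s within {a..b})"
proof -
  define \<Phi> where "\<Phi> g = Bcontfun (picard_step a b y0 F g)" for g :: "real \<Rightarrow>\<^sub>C real"
  have \<Phi>_apply: "apply_bcontfun (\<Phi> g) = picard_step a b y0 F g" for g
    using picard_step_bcontfun[OF \<open>a \<le> b\<close> cont bounded] by (simp add: \<Phi>_def Bcontfun_inverse)
  have "dist (\<Phi> g1) (\<Phi> g2) \<le> (b - a) * L * dist g1 g2" for g1 g2
    using picard_step_contraction[OF \<open>a \<le> b\<close> cont lipschitz \<open>0 \<le> L\<close>]
    by (intro dist_bound) (simp add: \<Phi>_apply)
  then obtain Z where "\<Phi> Z = Z"
    using banach_fix_type[of "(b - a) * L" \<Phi>] assms(1,5,6) by auto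
  then have fixed: "picard_step a b y0 F Z = Z"
    using \<Phi>_apply by metis
  have Z: "Z s = y0 - integral {s..b} (\<lambda>\<tau>. F \<tau> (Z \<tau>))" if "s \<in> {a..b}" for s
  proof -
    have "max a (min b s) = s"
      using that by simp
    then show ?thesis
      using fun_cong[OF fixed, of s] unfolding picard_step_def by simp
  qed
  have h: "continuous_on {a..b} (\<lambda>\<tau>. F \<tau> (Z \<tau>))"
    by (rule continuous_on_compose_graph[OF cont]) simp
  show thesis
  proof
    show "Z b = y0"
      using Z[of b] \<open>a \<le> b\<close> by simp
    show "\<bar>Z s - y0\<bar> \<le> B * (b - a)" if "s \<in> {a..b}" for s
      using integral_Icc_abs_le[OF h bounded that] Z[OF that] by simp
    show "(Z has_real_derivative F s (Z s)) (at s within {a..b})" if s: "s \<in> {a..b}" for s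
    proof -
      have "((\<lambda>u. y0 - integral {u..b} (\<lambda>\<tau>. F \<tau> (Z \<tau>))) has_real_derivative F s (Z s))
          (at s within {a..b})"
        using integral_has_real_derivative'[OF h s] by (auto intro!: derivative_eq_intros)
      then show ?thesis
        by (rule has_field_derivative_transform_within[OF _ zero_less_one s]) (simp add: Z)
    qed
  qed
qed

text \<open>Outside the box the right-hand side is replaced by its value at the nearest point of the
  box; the solution never leaves the box, where nothing has changed.\<close>

lemma ode_terminal_value_local_existence:
  fixes f :: "real \<Rightarrow> real \<Rightarrow> real"
  assumes "a \<le> b" "0 < r"
    and cont: "continuous_on ({a..b} \<times> {y0 - r..y0 + r}) (\<lambda>(s, y). f s y)"
    and bounded: "\<And>s y. s \<in> {a..b} \<Longrightarrow> y \<in> {y0 - r..y0 + r} \<Longrightarrow> \<bar>f s y\<bar> \<le> B"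
    and lipschitz: "\<And>s y z. s \<in> {a..b} \<Longrightarrow> y \<in> {y0 - r..y0 + r} \<Longrightarrow> z \<in> {y0 - r..y0 + r} \<Longrightarrow>
      \<bar>f s y - f s z\<bar> \<le> L * \<bar>y - z\<bar>"
    and "0 \<le> L" "(b - a) * B \<le> r" "(b - a) * L < 1"
  obtains Z where "Z b = y0" "\<And>s. s \<in> {a..b} \<Longrightarrow> \<bar>Z s - y0\<bar> \<le> r"
    "\<And>s. s \<in> {a..b} \<Longrightarrow> (Z has_real_derivative f s (Z s)) (at s within {a..b})"
proof -
  define clamp where "clamp y = max (y0 - r) (min (y0 + r) y)" for y :: real
  have clamp: "clamp y \<in> {y0 - r..y0 + r}" "y \<in> {y0 - r..y0 + r} \<Longrightarrow> clamp y = y"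
    "\<bar>clamp y - clamp z\<bar> \<le> \<bar>y - z\<bar>" for y z
    using \<open>0 < r\<close> unfolding clamp_def by auto
  have "continuous_on ({a..b} \<times> UNIV) (\<lambda>p. (fst p, clamp (snd p)))"
    unfolding clamp_def by (intro continuous_intros)
  then have "continuous_on ({a..b} \<times> UNIV) (\<lambda>p. (\<lambda>(s, y). f s y) (fst p, clamp (snd p)))"
    by (rule continuous_on_compose2[OF cont]) (use clamp(1) in auto)
  then have F_cont: "continuous_on ({a..b} \<times> UNIV) (\<lambda>(s, y). f s (clamp y))"
    by (simp add: case_prod_beta)
  have F_lipschitz: "\<bar>f s (clamp y) - f s (clamp z)\<bar> \<le> L * \<bar>y - z\<bar>" if "s \<in> {a..b}" for s y z
    using lipschitz[OF that clamp(1) clamp(1), of y z] clamp(3)[of y z] \<open>0 \<le> L\<close>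
    by (meson mult_left_mono order_trans)
  obtain Z where "Z b = y0" and Z_near: "\<And>s. s \<in> {a..b} \<Longrightarrow> \<bar>Z s - y0\<bar> \<le> B * (b - a)"
    and Z_deriv: "\<And>s. s \<in> {a..b} \<Longrightarrow> (Z has_real_derivative f s (clamp (Z s))) (at s within {a..b})"
    using ode_terminal_value_existence[OF \<open>a \<le> b\<close> F_cont bounded[OF _ clamp(1)] F_lipschitz
        \<open>0 \<le> L\<close> \<open>(b - a) * L < 1\<close>] by blast
  have "\<bar>Z s - y0\<bar> \<le> r" if "s \<in> {a..b}" for s
    using Z_near[OF that] \<open>(b - a) * B \<le> r\<close> by (simp add: mult.commute)
  moreover have "clamp (Z s) = Z s" if "s \<in> {a..b}" for s
    using clamp(2) calculation[OF that] by (simp add: abs_le_iff)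
  ultimately show thesis
    using that \<open>Z b = y0\<close> Z_deriv by simp
qed

section \<open>Solutions of the characteristic equation\<close>

lemma char_sol_restrict:
  assumes "char_sol v T t x J Y" "is_interval I" "I \<subseteq> J" "u \<in> I"
  shows "char_sol v T u (Y u) I Y"
proof -
  have "(Y has_real_derivative v s (Y s)) (at s within I)" if "s \<in> I" for s
    using assms that unfolding char_sol_def by (meson DERIV_subset subsetD)
  with assms show ?thesis
    unfolding char_sol_def by (intro conjI) (auto simp del: atLeastLessThan_iff)
qed

lemma char_sol_Icc_subset:
  assumes "char_sol v T t x J Y" "p \<in> J" "q \<in> J"
  shows "{p..q} \<subseteq> J"
proof -
  have "is_interval J"
    using assms(1) unfolding char_sol_def by blast
  then show ?thesis
    using assms(2,3) unfolding is_interval_1 by (meson atLeastAtMost_iff subsetI)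
qed

lemma char_sol_continuous_on:
  assumes "char_sol v T t x J Y"
  shows "continuous_on J Y"
  using assms unfolding char_sol_def by (intro DERIV_continuous_on[of J Y "\<lambda>s. v s (Y s)"]) blast

lemma char_sol_Icc_lower_bound:
  assumes Y: "char_sol v T t x J Y" and "{p..q} \<subseteq> J" "p \<le> q"
  obtains m where "0 < m" "\<And>s. s \<in> {p..q} \<Longrightarrow> m \<le> Y s"
proof -
  have "continuous_on {p..q} Y"
    using char_sol_continuous_on[OF Y] \<open>{p..q} \<subseteq> J\<close> by (rule continuous_on_subset)
  then obtain s0 where s0: "s0 \<in> {p..q}" "\<And>s. s \<in> {p..q} \<Longrightarrow> Y s0 \<le> Y s"
    using continuous_attains_inf[OF compact_Icc] \<open>p \<le> q\<close> by (metis atLeastatMost_empty_iff)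
  moreover have "0 < Y s0"
    using Y s0(1) \<open>{p..q} \<subseteq> J\<close> unfolding char_sol_def by blast
  ultimately show thesis
    using that by blast
qed

lemma char_sol_glue_left:
  assumes Y: "char_sol v T t x J Y" and "J \<subseteq> {a..}" "c \<in> J" "c \<le> t"
    and Z: "char_sol v T c (Y c) {a..c} Z"
  shows "char_sol v T t x ({a..c} \<union> J) (\<lambda>s. if s \<in> {a..c} then Z s else Y s)"
proof -
  let ?W = "\<lambda>s. if s \<in> {a..c} then Z s else Y s"
  let ?J = "J \<inter> {c..}"
  have union: "{a..c} \<union> J = {a..c} \<union> ?J"
    using \<open>J \<subseteq> {a..}\<close> by auto
  have "is_interval ?J"
    using Y unfolding char_sol_def by (intro is_interval_Int) (auto simp: is_interval_ci)
  moreover have "c \<in> {a..c} \<inter> ?J"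
    using Z \<open>c \<in> J\<close> unfolding char_sol_def by simp
  ultimately have "is_interval ({a..c} \<union> ?J)"
    unfolding is_interval_connected_1 by (intro connected_Un) auto
  moreover have "(?W has_real_derivative v s (?W s)) (at s within {a..c} \<union> ?J)"
    if s: "s \<in> {a..c} \<union> ?J" for s
  proof -
    have "(Y has_real_derivative v s (Y s)) (at s within ?J)" if "s \<in> ?J" for s
      using Y that unfolding char_sol_def by (meson DERIV_subset IntD1 inf_le1)
    moreover have "(Z has_real_derivative v s (Z s)) (at s within {a..c})" if "s \<in> {a..c}" for s
      using Z that unfolding char_sol_def by blast
    moreover have "Z c = Y c"
      using Z unfolding char_sol_def by blast
    ultimately show ?thesis
      using has_real_derivative_glue_Icc[OF _ _ _ _ _ _ s, of Z "\<lambda>s. v s (Z s)" Y "\<lambda>s. v s (Y s)"]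
        \<open>c \<in> J\<close> by (simp add: if_distrib[of "v s"])
  qed
  moreover have "?W t = x"
    using Y Z \<open>c \<le> t\<close> unfolding char_sol_def by auto
  moreover have "0 < ?W s" if "s \<in> {a..c} \<union> J" for s
    using Y Z that unfolding char_sol_def by auto
  moreover have "{a..c} \<union> J \<subseteq> {0..<T}" "t \<in> {a..c} \<union> J"
    using Y Z unfolding char_sol_def by auto
  ultimately show ?thesis
    unfolding char_sol_def union by blast
qed

lemma char_sol_below_threshold:
  assumes Y: "char_sol v T t x J Y" and "x < x0"
    and nonneg: "\<And>s y. s \<in> {0..<T} \<Longrightarrow> y \<in> {0<..<x0} \<Longrightarrow> 0 \<le> v s y"
    and "s \<in> J" "s \<le> t"
  shows "Y s < x0"
proof (rule ccontr)
  assume "\<not> Y s < x0"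
  have "t \<in> J" "Y t = x" "J \<subseteq> {0..<T}" and pos: "\<And>u. u \<in> J \<Longrightarrow> 0 < Y u"
    and deriv: "\<And>u. u \<in> J \<Longrightarrow> (Y has_real_derivative v u (Y u)) (at u within J)"
    using Y unfolding char_sol_def by auto
  have sub: "{s..t} \<subseteq> J"
    using char_sol_Icc_subset[OF Y \<open>s \<in> J\<close> \<open>t \<in> J\<close>] .
  define S where "S = {s..t} \<inter> Y -` {x0..}"
  have "closed S"
    unfolding S_def using continuous_on_subset[OF char_sol_continuous_on[OF Y] sub]
    by (rule continuous_closed_preimage) auto
  moreover have "s \<in> S" "bdd_above S"
    using \<open>\<not> Y s < x0\<close> \<open>s \<le> t\<close> unfolding S_def by (auto intro: bdd_above_Int1)
  ultimately have "Sup S \<in> S"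
    by (intro closed_contains_Sup) auto
  \<comment> \<open>after the last time \<open>c\<close> at which \<open>Y \<ge> x0\<close>, \<open>v \<ge> 0\<close> along \<open>Y\<close>, so \<open>Y c \<le> Y t = x\<close>\<close>
  define c where "c = Sup S"
  have c: "c \<in> {s..t}" "x0 \<le> Y c"
    using \<open>Sup S \<in> S\<close> unfolding c_def S_def by auto
  have after: "Y u < x0" if "c < u" "u \<le> t" for u
  proof (rule ccontr)
    assume "\<not> Y u < x0"
    then have "u \<in> S"
      using that c(1) unfolding S_def by auto
    then show False
      using cSup_upper[OF _ \<open>bdd_above S\<close>] that(1) unfolding c_def by fastforce
  qed
  have "0 * (t - c) \<le> Y t - Y c"
  proof (rule has_real_derivative_Icc_increment_ge[where f' = "\<lambda>u. v u (Y u)"])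
    show "c \<le> t"
      using c(1) by simp
    show "(Y has_real_derivative v u (Y u)) (at u within {c..t})" if "u \<in> {c..t}" for u
      using deriv sub c(1) that by (meson DERIV_subset atLeastAtMost_iff order_trans subsetD subsetI)
    show "0 \<le> v u (Y u)" if "u \<in> {c<..<t}" for u
    proof -
      have "u \<in> J"
        using sub c(1) that by auto
      then show ?thesis
        using nonneg \<open>J \<subseteq> {0..<T}\<close> pos after that by auto
    qed
  qed
  then show False
    using c(2) \<open>Y t = x\<close> \<open>x < x0\<close> by simp
qed

lemma char_sol_lyapunov_time_bound:
  assumes Y: "char_sol v T t x J Y" and "x < x0" "0 \<le> \<delta>"
    and G_deriv: "\<And>y. y \<in> {0<..<x0} \<Longrightarrow> (G has_real_derivative g y) (at y)"
    and G_nonneg: "\<And>y. y \<in> {0<..<x0} \<Longrightarrow> 0 \<le> G y"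
    and g_pos: "\<And>y. y \<in> {0<..<x0} \<Longrightarrow> 0 < g y"
    and drift: "\<And>s y. s \<in> {0..<T} \<Longrightarrow> y \<in> {0<..<x0} \<Longrightarrow> \<delta> \<le> g y * v s y"
    and "s \<in> J" "s \<le> t"
  shows "\<delta> * (t - s) \<le> G x"
proof -
  have "t \<in> J" "Y t = x" "J \<subseteq> {0..<T}"
    using Y unfolding char_sol_def by auto
  have sub: "{s..t} \<subseteq> J"
    using char_sol_Icc_subset[OF Y \<open>s \<in> J\<close> \<open>t \<in> J\<close>] .
  have "0 \<le> v s y" if "s \<in> {0..<T}" "y \<in> {0<..<x0}" for s y
    using drift[OF that] g_pos[OF that(2)] \<open>0 \<le> \<delta>\<close> by (metis order_trans zero_le_mult_iff not_less)
  then have range: "Y u \<in> {0<..<x0}" if "u \<in> {s..t}" for u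
    using char_sol_below_threshold[OF Y \<open>x < x0\<close>] Y sub that unfolding char_sol_def by auto
  have "\<delta> * (t - s) \<le> G (Y t) - G (Y s)"
  proof (rule has_real_derivative_Icc_increment_ge[where f' = "\<lambda>u. g (Y u) * v u (Y u)"])
    show "s \<le> t"
      using \<open>s \<le> t\<close> .
    show "((\<lambda>u. G (Y u)) has_real_derivative g (Y u) * v u (Y u)) (at u within {s..t})"
      if "u \<in> {s..t}" for u
    proof -
      have "(Y has_real_derivative v u (Y u)) (at u within {s..t})"
        using Y sub that unfolding char_sol_def by (meson DERIV_subset subsetD)
      then show ?thesis
        using DERIV_chain2[of G "g (Y u)" Y u "v u (Y u)"] G_deriv[OF range[OF that]] by blast
    qed
    show "\<delta> \<le> g (Y u) * v u (Y u)" if "u \<in> {s<..<t}" for u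
    proof -
      have "u \<in> {0..<T}"
        using subsetD[OF sub, of u] \<open>J \<subseteq> {0..<T}\<close> that by auto
      then show ?thesis
        using drift range that by simp
    qed
  qed
  then show ?thesis
    using G_nonneg[OF range[of s]] \<open>Y t = x\<close> \<open>s \<le> t\<close> by simp
qed

section \<open>The characteristic flow\<close>

locale characteristic_flow =
  fixes v :: "real \<Rightarrow> real \<Rightarrow> real" and T K :: real
    and Sig :: "real \<Rightarrow> real \<Rightarrow> real set" and X :: "real \<Rightarrow> real \<Rightarrow> real \<Rightarrow> real"
  assumes K_pos: "0 < K"
    and v_cont: "continuous_on ({0<..<T} \<times> {0<..}) (\<lambda>(t, x). v t x)"
    and v_growth: "\<And>t x. t \<in> {0..<T} \<Longrightarrow> 0 < x \<Longrightarrow> \<bar>v t x\<bar> \<le> K * (1 + x)"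
    and v_lipschitz: "\<And>r. 0 < r \<Longrightarrow>
      \<exists>L\<ge>0. \<forall>t\<in>{0<..<T}. \<forall>x\<ge>r. \<forall>y\<ge>r. \<bar>v t x - v t y\<bar> \<le> L * \<bar>x - y\<bar>"
    and X_max: "\<And>t x. t \<in> {0..<T} \<Longrightarrow> 0 < x \<Longrightarrow> max_char_sol v T t x (Sig t x) (\<lambda>s. X s t x)"
begin

lemma char_sol_Icc_unique:
  assumes Y1: "char_sol v T u y {p..q} Y1" and Y2: "char_sol v T u y {p..q} Y2" and "s \<in> {p..q}"
  shows "Y1 s = Y2 s"
proof -
  have "p \<le> q"
    using \<open>s \<in> {p..q}\<close> by simp
  obtain m1 where m1: "0 < m1" "\<And>s. s \<in> {p..q} \<Longrightarrow> m1 \<le> Y1 s"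
    using char_sol_Icc_lower_bound[OF Y1 order_refl \<open>p \<le> q\<close>] by blast
  obtain m2 where m2: "0 < m2" "\<And>s. s \<in> {p..q} \<Longrightarrow> m2 \<le> Y2 s"
    using char_sol_Icc_lower_bound[OF Y2 order_refl \<open>p \<le> q\<close>] by blast
  obtain L where L: "\<forall>t\<in>{0<..<T}. \<forall>x\<ge>min m1 m2. \<forall>y\<ge>min m1 m2. \<bar>v t x - v t y\<bar> \<le> L * \<bar>x - y\<bar>"
    using v_lipschitz[of "min m1 m2"] m1(1) m2(1) by auto
  have "{p..q} \<subseteq> {0..<T}"
    using Y1 unfolding char_sol_def by blast
  then have "0 \<le> p" "q < T"
    using \<open>p \<le> q\<close> by auto
  then have interior: "{p<..<q} \<subseteq> {0<..<T}"
    by auto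
  show ?thesis
  proof (rule ode_solutions_eq_if_eq_at[where f = v and L = L and Y = Y1 and Z = Y2])
    show "(Y1 has_real_derivative v r (Y1 r)) (at r within {p..q})"
      "(Y2 has_real_derivative v r (Y2 r)) (at r within {p..q})" if "r \<in> {p..q}" for r
      using Y1 Y2 that unfolding char_sol_def by blast+
    show "\<bar>v r (Y1 r) - v r (Y2 r)\<bar> \<le> L * \<bar>Y1 r - Y2 r\<bar>" if "r \<in> {p<..<q}" for r
    proof -
      have "min m1 m2 \<le> Y1 r" "min m1 m2 \<le> Y2 r"
        using m1(2)[of r] m2(2)[of r] that by auto
      then show ?thesis
        using L interior that by blast
    qed
    show "u \<in> {p..q}" "Y1 u = Y2 u"
      using Y1 Y2 unfolding char_sol_def by auto
  qed (rule \<open>s \<in> {p..q}\<close>)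
qed

lemma char_sol_bounds:
  assumes Y: "char_sol v T t x J Y" and "s \<in> J" "s \<le> t"
  shows "(1 + x) * exp (- K * T) \<le> 1 + Y s" "1 + Y s \<le> (1 + x) * exp (K * T)"
proof -
  have "t \<in> J" "J \<subseteq> {0..<T}" "Y t = x"
    using Y unfolding char_sol_def by auto
  have sub: "{s..t} \<subseteq> J"
    using char_sol_Icc_subset[OF Y \<open>s \<in> J\<close> \<open>t \<in> J\<close>] .
  have pos: "0 < Y u" if "u \<in> {s..t}" for u
    using Y sub that unfolding char_sol_def by blast
  have "norm (ln (1 + Y t) - ln (1 + Y s)) \<le> K * norm (t - s)"
  proof (rule field_differentiable_bound[where f' = "\<lambda>u. v u (Y u) / (1 + Y u)"])
    show "((\<lambda>u. ln (1 + Y u)) has_field_derivative v u (Y u) / (1 + Y u)) (at u within {s..t})"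
      if "u \<in> {s..t}" for u
    proof -
      have "(Y has_real_derivative v u (Y u)) (at u within {s..t})"
        using Y sub that unfolding char_sol_def by (meson DERIV_subset subsetD)
      then show ?thesis
        using pos[OF that] by (auto intro!: derivative_eq_intros simp: field_simps)
    qed
    show "norm (v u (Y u) / (1 + Y u)) \<le> K" if "u \<in> {s..t}" for u
    proof -
      have "\<bar>v u (Y u)\<bar> \<le> K * (1 + Y u)"
        using v_growth pos[OF that] sub that \<open>J \<subseteq> {0..<T}\<close> by blast
      then show ?thesis
        using pos[OF that] by (simp add: divide_le_eq abs_div)
    qed
  qed (use \<open>s \<le> t\<close> in auto)
  moreover have "K * (t - s) \<le> K * T"
  proof -
    have "0 \<le> s" "t < T"
      using \<open>s \<in> J\<close> \<open>t \<in> J\<close> \<open>J \<subseteq> {0..<T}\<close> by auto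
    then show ?thesis
      using K_pos by (intro mult_left_mono) auto
  qed
  ultimately have "\<bar>ln (1 + Y s) - ln (1 + x)\<bar> \<le> K * T"
    using \<open>s \<le> t\<close> \<open>Y t = x\<close> by simp
  then have "exp (ln (1 + x) + - K * T) \<le> exp (ln (1 + Y s))"
    "exp (ln (1 + Y s)) \<le> exp (ln (1 + x) + K * T)"
    by simp_all
  moreover have "0 < 1 + x" "0 < 1 + Y s"
    using pos[of s] pos[of t] \<open>s \<le> t\<close> \<open>Y t = x\<close> by auto
  ultimately show "(1 + x) * exp (- K * T) \<le> 1 + Y s" "1 + Y s \<le> (1 + x) * exp (K * T)"
    by (simp_all only: exp_add exp_ln)
qed

lemma char_sol_exists_Icc:
  assumes "0 < a" "a \<le> c" "c < T" "0 < r" "y0 \<in> {2 * r..M}"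
    and L: "\<forall>t\<in>{0<..<T}. \<forall>x\<ge>r. \<forall>y\<ge>r. \<bar>v t x - v t y\<bar> \<le> L * \<bar>x - y\<bar>" "0 \<le> L"
    and small: "(c - a) * (K * (1 + M + r)) \<le> r" "(c - a) * L < 1"
  shows "\<exists>Z. char_sol v T c y0 {a..c} Z"
proof -
  have box: "r \<le> y" "y \<le> M + r" if "y \<in> {y0 - r..y0 + r}" for y
    using that \<open>y0 \<in> {2 * r..M}\<close> by auto
  have times: "{a..c} \<subseteq> {0<..<T}"
    using \<open>0 < a\<close> \<open>c < T\<close> by auto
  have cont: "continuous_on ({a..c} \<times> {y0 - r..y0 + r}) (\<lambda>(s, y). v s y)"
    using times box(1) \<open>0 < r\<close> by (intro continuous_on_subset[OF v_cont]) force
  have bounded: "\<bar>v s y\<bar> \<le> K * (1 + M + r)" if "s \<in> {a..c}" "y \<in> {y0 - r..y0 + r}" for s y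
  proof -
    have "\<bar>v s y\<bar> \<le> K * (1 + y)"
      using v_growth times that box(1)[OF that(2)] \<open>0 < r\<close> by auto
    also have "\<dots> \<le> K * (1 + M + r)"
      using box(2)[OF that(2)] K_pos by simp
    finally show ?thesis .
  qed
  have lipschitz: "\<bar>v s y - v s z\<bar> \<le> L * \<bar>y - z\<bar>"
    if "s \<in> {a..c}" "y \<in> {y0 - r..y0 + r}" "z \<in> {y0 - r..y0 + r}" for s y z
    using L(1) times that box(1) by blast
  obtain Z where Z: "Z c = y0" "\<And>s. s \<in> {a..c} \<Longrightarrow> \<bar>Z s - y0\<bar> \<le> r"
    "\<And>s. s \<in> {a..c} \<Longrightarrow> (Z has_real_derivative v s (Z s)) (at s within {a..c})"
    using ode_terminal_value_local_existence[OF \<open>a \<le> c\<close> \<open>0 < r\<close> cont bounded lipschitz L(2) small]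
    by blast
  have "0 < Z s" if "s \<in> {a..c}" for s
    using Z(2)[OF that] abs_ge_minus_self[of "Z s - y0"] \<open>y0 \<in> {2 * r..M}\<close> \<open>0 < r\<close> by auto
  then show ?thesis
    using Z times \<open>a \<le> c\<close> unfolding char_sol_def by (intro exI[of _ Z]) auto
qed

lemma char_sol_backward_existence:
  assumes "0 < m" "m \<le> M"
  obtains \<epsilon> where "0 < \<epsilon>"
    "\<And>a c y0. 0 < a \<Longrightarrow> a \<le> c \<Longrightarrow> c - a \<le> \<epsilon> \<Longrightarrow> c < T \<Longrightarrow> y0 \<in> {m..M} \<Longrightarrow>
      \<exists>Z. char_sol v T c y0 {a..c} Z"
proof -
  define r where "r = m / 2"
  have "0 < r"
    using \<open>0 < m\<close> by (simp add: r_def)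
  obtain L where "0 \<le> L"
    and L: "\<forall>t\<in>{0<..<T}. \<forall>x\<ge>r. \<forall>y\<ge>r. \<bar>v t x - v t y\<bar> \<le> L * \<bar>x - y\<bar>"
    using v_lipschitz[OF \<open>0 < r\<close>] by blast
  define B where "B = K * (1 + M + r)"
  have "0 < B"
    using K_pos \<open>0 < m\<close> \<open>m \<le> M\<close> \<open>0 < r\<close> by (simp add: B_def)
  show thesis
  proof (rule that)
    show "0 < min (r / B) (1 / (L + 1))"
      using \<open>0 < r\<close> \<open>0 < B\<close> \<open>0 \<le> L\<close> by simp
    fix a c y0
    assume "0 < a" "a \<le> c" "c - a \<le> min (r / B) (1 / (L + 1))" "c < T" "y0 \<in> {m..M}"
    then have "(c - a) * B \<le> r / B * B" "(c - a) * L \<le> 1 / (L + 1) * L"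
      using \<open>0 < B\<close> \<open>0 \<le> L\<close> by (intro mult_right_mono; simp)+
    moreover have "1 / (L + 1) * L < 1"
      using \<open>0 \<le> L\<close> by (simp add: field_simps)
    ultimately have "(c - a) * B \<le> r" "(c - a) * L < 1"
      using \<open>0 < B\<close> by auto
    then show "\<exists>Z. char_sol v T c y0 {a..c} Z"
      using \<open>y0 \<in> {m..M}\<close> char_sol_exists_Icc[OF \<open>0 < a\<close> \<open>a \<le> c\<close> \<open>c < T\<close> \<open>0 < r\<close> _ L \<open>0 \<le> L\<close>]
      unfolding B_def r_def by simp
  qed
qed

lemma char_sol_eq_on_overlap:
  assumes Y: "char_sol v T t x J Y" and Z: "char_sol v T c (Y c) {a..c} Z"
    and "c \<in> J" "s \<in> J" "s \<in> {a..c}"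
  shows "Z s = Y s"
proof -
  have "char_sol v T c (Y c) {s..c} Y"
    using char_sol_restrict[OF Y is_interval_cc char_sol_Icc_subset[OF Y \<open>s \<in> J\<close> \<open>c \<in> J\<close>]]
      \<open>s \<in> {a..c}\<close> by simp
  moreover have "char_sol v T c (Y c) {s..c} Z"
    using char_sol_restrict[OF Z is_interval_cc, of s c c] Z \<open>s \<in> {a..c}\<close>
    unfolding char_sol_def by auto
  ultimately show ?thesis
    using char_sol_Icc_unique \<open>s \<in> {a..c}\<close> by (metis atLeastAtMost_iff order_refl)
qed

lemma max_char_sol_absorbs_left_extension:
  assumes max: "max_char_sol v T t x J Y" and "J \<subseteq> {a..}" "c \<in> J" "c \<le> t" "a \<le> c"
    and Z: "char_sol v T c (Y c) {a..c} Z"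
  shows "a \<in> J"
proof -
  have Y: "char_sol v T t x J Y"
    using max unfolding max_char_sol_def by blast
  have "char_sol v T t x ({a..c} \<union> J) (\<lambda>s. if s \<in> {a..c} then Z s else Y s)"
    by (rule char_sol_glue_left[OF Y \<open>J \<subseteq> {a..}\<close> \<open>c \<in> J\<close> \<open>c \<le> t\<close> Z])
  moreover have "\<forall>s\<in>J. (if s \<in> {a..c} then Z s else Y s) = Y s"
    using char_sol_eq_on_overlap[OF Y Z \<open>c \<in> J\<close>] by simp
  ultimately have "{a..c} \<union> J = J"
    using max unfolding max_char_sol_def by blast
  then show "a \<in> J"
    using \<open>a \<le> c\<close> by (metis Un_iff atLeastAtMost_iff order_refl)
qed

lemma max_char_sol_Inf_eq_0:
  assumes max: "max_char_sol v T t x J Y" and "0 < m"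
    and lower: "\<And>s. s \<in> J \<Longrightarrow> s \<le> t \<Longrightarrow> m \<le> Y s"
  shows "Inf J = 0"
proof -
  have Y: "char_sol v T t x J Y"
    using max unfolding max_char_sol_def by blast
  then have "t \<in> J" "J \<subseteq> {0..<T}"
    unfolding char_sol_def by auto
  then have "J \<noteq> {}" and bdd: "bdd_below J"
    by (auto intro!: bdd_belowI[of _ 0])
  have Inf_le: "Inf J \<le> s" if "s \<in> J" for s
    using cInf_lower[OF that bdd] .
  have "0 \<le> Inf J"
    using \<open>J \<subseteq> {0..<T}\<close> by (intro cInf_greatest[OF \<open>J \<noteq> {}\<close>]) auto
  moreover have "\<not> 0 < Inf J"
  proof
    assume "0 < Inf J"
    define M where "M = (1 + x) * exp (K * T)"
    have range: "Y s \<in> {m..M}" if "s \<in> J" "s \<le> t" for s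
      using char_sol_bounds(2)[OF Y that] lower[OF that] by (simp add: M_def)
    then have "m \<le> M"
      using range[OF \<open>t \<in> J\<close> order_refl] by simp
    then obtain \<epsilon> where "0 < \<epsilon>" and \<epsilon>: "\<And>a c y0. 0 < a \<Longrightarrow> a \<le> c \<Longrightarrow> c - a \<le> \<epsilon> \<Longrightarrow> c < T \<Longrightarrow>
        y0 \<in> {m..M} \<Longrightarrow> \<exists>Z. char_sol v T c y0 {a..c} Z"
      using char_sol_backward_existence[OF \<open>0 < m\<close>] by blast
    obtain c0 where "c0 \<in> J" "c0 < Inf J + \<epsilon> / 2"
      using cInf_less_iff[OF \<open>J \<noteq> {}\<close> bdd, of "Inf J + \<epsilon> / 2"] \<open>0 < \<epsilon>\<close> by auto
    define c where "c = min c0 t"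
    define a where "a = max (Inf J / 2) (Inf J - \<epsilon> / 2)"
    have "c \<in> J" "c \<le> t"
      using \<open>c0 \<in> J\<close> \<open>t \<in> J\<close> by (simp_all add: c_def min_def)
    have "0 < a" "a < Inf J"
      using \<open>0 < Inf J\<close> \<open>0 < \<epsilon>\<close> by (simp_all add: a_def)
    have "c - a \<le> \<epsilon>"
      using \<open>c0 < Inf J + \<epsilon> / 2\<close> min.cobounded1[of c0 t] max.cobounded2[of "Inf J / 2" "Inf J - \<epsilon> / 2"]
      unfolding a_def c_def by linarith
    have "J \<subseteq> {a..}"
      using Inf_le \<open>a < Inf J\<close> by (meson atLeast_iff less_imp_le order_trans subsetI)
    have "a \<le> c" "c < T"
      using \<open>J \<subseteq> {a..}\<close> \<open>J \<subseteq> {0..<T}\<close> \<open>c \<in> J\<close> by auto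
    then obtain Z where "char_sol v T c (Y c) {a..c} Z"
      using \<epsilon>[OF \<open>0 < a\<close> \<open>a \<le> c\<close> \<open>c - a \<le> \<epsilon>\<close> \<open>c < T\<close> range[OF \<open>c \<in> J\<close> \<open>c \<le> t\<close>]] by blast
    then have "a \<in> J"
      using max_char_sol_absorbs_left_extension[OF max \<open>J \<subseteq> {a..}\<close> \<open>c \<in> J\<close> \<open>c \<le> t\<close> \<open>a \<le> c\<close>] by blast
    then show False
      using Inf_le[of a] \<open>a < Inf J\<close> by linarith
  qed
  ultimately show ?thesis
    by simp
qed

lemma char_sol_strict_mono:
  assumes Yx: "char_sol v T t x Jx Yx" and Yy: "char_sol v T t y Jy Yy" and "x < y"
    and "s \<in> Jx" "s \<in> Jy" "s \<le> t"
  shows "Yx s < Yy s"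
proof (rule ccontr)
  assume "\<not> Yx s < Yy s"
  have "t \<in> Jx" "t \<in> Jy" "Yx t = x" "Yy t = y"
    using Yx Yy unfolding char_sol_def by auto
  have sub: "{s..t} \<subseteq> Jx" "{s..t} \<subseteq> Jy"
    using char_sol_Icc_subset Yx Yy \<open>s \<in> Jx\<close> \<open>s \<in> Jy\<close> \<open>t \<in> Jx\<close> \<open>t \<in> Jy\<close> by blast+
  have "continuous_on {s..t} (\<lambda>u. Yy u - Yx u)"
    using sub char_sol_continuous_on[OF Yx] char_sol_continuous_on[OF Yy]
    by (intro continuous_on_diff) (auto intro: continuous_on_subset)
  then obtain s' where s': "s' \<in> {s..t}" "Yy s' - Yx s' = 0"
    using IVT'[of "\<lambda>u. Yy u - Yx u" s 0 t] \<open>\<not> Yx s < Yy s\<close> \<open>s \<le> t\<close> \<open>x < y\<close>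
      \<open>Yx t = x\<close> \<open>Yy t = y\<close> by auto
  have "{s'..t} \<subseteq> Jx" "{s'..t} \<subseteq> Jy"
    using sub s'(1) by auto
  then have "char_sol v T s' (Yx s') {s'..t} Yx" "char_sol v T s' (Yx s') {s'..t} Yy"
    using char_sol_restrict[OF Yx, of "{s'..t}" s'] char_sol_restrict[OF Yy, of "{s'..t}" s'] s'
    by auto
  then have "Yx t = Yy t"
    using char_sol_Icc_unique s'(1) by (metis atLeastAtMost_iff order_refl)
  then show False
    using \<open>Yx t = x\<close> \<open>Yy t = y\<close> \<open>x < y\<close> by simp
qed

lemma Sig_char_sol: "t \<in> {0..<T} \<Longrightarrow> 0 < x \<Longrightarrow> char_sol v T t x (Sig t x) (\<lambda>s. X s t x)"
  using X_max unfolding max_char_sol_def by blast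

lemma csigma_le:
  assumes "t \<in> {0..<T}" "0 < x" "s \<in> Sig t x"
  shows "csigma Sig t x \<le> s"
proof -
  have "bdd_below (Sig t x)"
    using Sig_char_sol[OF assms(1,2)] unfolding char_sol_def by (auto intro!: bdd_belowI[of _ 0])
  then show ?thesis
    unfolding csigma_def using cInf_lower[OF assms(3)] by blast
qed

lemma csigma_nonneg:
  assumes "t \<in> {0..<T}" "0 < x"
  shows "0 \<le> csigma Sig t x"
proof -
  have "t \<in> Sig t x" "Sig t x \<subseteq> {0..<T}"
    using Sig_char_sol[OF assms] unfolding char_sol_def by auto
  then show ?thesis
    unfolding csigma_def by (intro cInf_greatest) auto
qed

lemma csigma_initial_eq_0:
  assumes "0 < T" "0 < x"
  shows "csigma Sig 0 x = 0"
  using csigma_le[of 0 x 0] csigma_nonneg[of 0 x] Sig_char_sol[of 0 x] assms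
  unfolding char_sol_def by force

lemma csigma_eq_0_large:
  assumes t: "t \<in> {0..<T}"
  shows "csigma Sig t (2 * exp (K * T)) = 0"
proof -
  let ?x = "2 * exp (K * T)"
  have "1 \<le> X s t ?x" if "s \<in> Sig t ?x" "s \<le> t" for s
  proof -
    have "2 = ?x * exp (- K * T)"
      by (simp add: exp_minus field_simps)
    also have "\<dots> \<le> (1 + ?x) * exp (- K * T)"
      by simp
    also have "\<dots> \<le> 1 + X s t ?x"
      using char_sol_bounds(1)[OF Sig_char_sol[OF t] that] by simp
    finally show ?thesis
      by simp
  qed
  then show ?thesis
    unfolding csigma_def by (intro max_char_sol_Inf_eq_0[OF X_max[OF t], where m = 1]) auto
qed

lemma csigma_antimono:
  assumes t: "t \<in> {0..<T}" and "0 < x" "x \<le> y"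
  shows "csigma Sig t y \<le> csigma Sig t x"
proof (rule ccontr)
  assume "\<not> csigma Sig t y \<le> csigma Sig t x"
  then have less: "Inf (Sig t x) < csigma Sig t y"
    unfolding csigma_def by simp
  have "0 < y"
    using \<open>0 < x\<close> \<open>x \<le> y\<close> by simp
  note Yx = Sig_char_sol[OF t \<open>0 < x\<close>] and Yy = Sig_char_sol[OF t \<open>0 < y\<close>]
  have "t \<in> Sig t x" "t \<in> Sig t y"
    using Yx Yy unfolding char_sol_def by auto
  have "bdd_below (Sig t x)"
    using Yx unfolding char_sol_def by (auto intro!: bdd_belowI[of _ 0])
  then obtain s0 where "s0 \<in> Sig t x" "s0 < csigma Sig t y"
    using cInf_less_iff less \<open>t \<in> Sig t x\<close> by blast
  moreover have "csigma Sig t y \<le> t"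
    using csigma_le[OF t \<open>0 < y\<close> \<open>t \<in> Sig t y\<close>] .
  ultimately have sub: "{s0..t} \<subseteq> Sig t x" "s0 \<le> t"
    using char_sol_Icc_subset[OF Yx _ \<open>t \<in> Sig t x\<close>] by auto
  obtain m where "0 < m" and m: "\<And>s. s \<in> {s0..t} \<Longrightarrow> m \<le> X s t x"
    using char_sol_Icc_lower_bound[OF Yx sub] by blast
  have "m \<le> X s t y" if "s \<in> Sig t y" "s \<le> t" for s
  proof -
    have "s0 < s"
      using \<open>s0 < csigma Sig t y\<close> csigma_le[OF t \<open>0 < y\<close> that(1)] by simp
    then have "s \<in> {s0..t}"
      using that(2) by simp
    moreover have "X s t x \<le> X s t y"
      using char_sol_strict_mono[OF Yx Yy _ _ that(1) that(2)] sub \<open>s \<in> {s0..t}\<close> \<open>x \<le> y\<close>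
      by (cases "x = y") (auto simp: less_imp_le)
    ultimately show ?thesis
      using m by fastforce
  qed
  then have "csigma Sig t y = 0"
    unfolding csigma_def by (rule max_char_sol_Inf_eq_0[OF X_max[OF t \<open>0 < y\<close>] \<open>0 < m\<close>])
  then show False
    using \<open>s0 < csigma Sig t y\<close> csigma_nonneg[OF t \<open>0 < x\<close>] csigma_le[OF t \<open>0 < x\<close> \<open>s0 \<in> Sig t x\<close>]
    by simp
qed

lemma csigma_ge_lyapunov:
  assumes t: "t \<in> {0..<T}" and x: "x \<in> {0<..<x0}" and "0 < \<delta>"
    and G_nonneg: "\<And>y. y \<in> {0<..<x0} \<Longrightarrow> 0 \<le> G y"
    and G_deriv: "\<And>y. y \<in> {0<..<x0} \<Longrightarrow> (G has_real_derivative g y) (at y)"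
    and g_pos: "\<And>y. y \<in> {0<..<x0} \<Longrightarrow> 0 < g y"
    and drift: "\<And>s y. s \<in> {0..<T} \<Longrightarrow> y \<in> {0<..<x0} \<Longrightarrow> \<delta> \<le> g y * v s y"
  shows "t - G x / \<delta> \<le> csigma Sig t x"
proof -
  have Y: "char_sol v T t x (Sig t x) (\<lambda>s. X s t x)"
    using Sig_char_sol t x by auto
  have "t - G x / \<delta> \<le> s" if "s \<in> Sig t x" for s
  proof (cases "s \<le> t")
    case True
    have "\<delta> * (t - s) \<le> G x"
      using x \<open>0 < \<delta>\<close> G_nonneg
      by (intro char_sol_lyapunov_time_bound[OF Y _ _ G_deriv _ g_pos drift that True]) auto
    then show ?thesis
      using \<open>0 < \<delta>\<close> by (simp add: field_simps)
  next
    case False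
    have "0 \<le> G x / \<delta>"
      using G_nonneg[OF x] \<open>0 < \<delta>\<close> by simp
    then show ?thesis
      using False by simp
  qed
  then show ?thesis
    using Y unfolding csigma_def char_sol_def by (intro cInf_greatest) auto
qed

lemma csigma_pos_near_zero:
  assumes t: "t \<in> {0<..<T}" and "0 < x0" "0 < \<delta>"
    and G_cont: "continuous_on {0..x0} G" and "G 0 = 0"
    and G_deriv: "\<And>y. y \<in> {0<..<x0} \<Longrightarrow> (G has_real_derivative g y) (at y)"
    and g_pos: "\<And>y. y \<in> {0<..<x0} \<Longrightarrow> 0 < g y"
    and drift: "\<And>s y. s \<in> {0..<T} \<Longrightarrow> y \<in> {0<..<x0} \<Longrightarrow> \<delta> \<le> g y * v s y"
  obtains x1 where "0 < x1" "\<And>x. x \<in> {0<..<x1} \<Longrightarrow> 0 < csigma Sig t x"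
proof -
  have G_nonneg: "0 \<le> G y" if "y \<in> {0<..<x0}" for y
    using increasing_on_Icc_if_deriv_nonneg[OF G_cont G_deriv, of y] g_pos that \<open>G 0 = 0\<close>
    by (simp add: less_imp_le)
  have "0 < \<delta> * t"
    using \<open>0 < \<delta>\<close> t by simp
  then obtain d where "0 < d" and d: "\<And>y. y \<in> {0..x0} \<Longrightarrow> \<bar>y\<bar> < d \<Longrightarrow> \<bar>G y\<bar> < \<delta> * t"
    using G_cont \<open>G 0 = 0\<close> \<open>0 < x0\<close> unfolding continuous_on_iff dist_real_def
    by (metis atLeastAtMost_iff diff_zero less_imp_le order_refl)
  show thesis
  proof (rule that)
    show "0 < min d x0"
      using \<open>0 < d\<close> \<open>0 < x0\<close> by simp
    fix x
    assume x: "x \<in> {0<..<min d x0}"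
    then have "0 < t - G x / \<delta>"
      using d[of x] \<open>0 < \<delta>\<close> by (simp add: field_simps)
    also have "\<dots> \<le> csigma Sig t x"
      using x t \<open>0 < \<delta>\<close> by (intro csigma_ge_lyapunov[OF _ _ _ G_nonneg G_deriv g_pos drift]) auto
    finally show "0 < csigma Sig t x" .
  qed
qed

lemma csigma_pos_near_zero_product:
  fixes a :: "real \<Rightarrow> real" and w :: "real \<Rightarrow> real \<Rightarrow> real"
  assumes t: "t \<in> {0<..<T}"
    and v_eq: "\<And>s y. s \<in> {0..<T} \<Longrightarrow> 0 < y \<Longrightarrow> v s y = a y * w s y"
    and a_cont: "continuous_on {0..} a" and a_pos: "\<And>y. 0 < y \<Longrightarrow> 0 < a y"
    and a_int: "(\<lambda>y. 1 / a y) absolutely_integrable_on {0<..<1}"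
    and "0 < \<delta>" "0 < x0" and w_ge: "\<And>s y. s \<in> {0..<T} \<Longrightarrow> y \<in> {0<..<x0} \<Longrightarrow> \<delta> \<le> w s y"
  obtains x1 where "0 < x1" "\<And>x. x \<in> {0<..<x1} \<Longrightarrow> 0 < csigma Sig t x"
proof -
  have a_int: "(\<lambda>y. 1 / a y) integrable_on {0..1}"
    using a_int unfolding absolutely_integrable_on_def integrable_on_Icc_iff_Ioo by blast
  show thesis
  proof (rule csigma_pos_near_zero[OF t _ \<open>0 < \<delta>\<close>, of "min x0 1" "\<lambda>y. integral {0..y} (\<lambda>y. 1 / a y)"
        "\<lambda>y. 1 / a y"])
    show "continuous_on {0..min x0 1} (\<lambda>y. integral {0..y} (\<lambda>y. 1 / a y))"
      using indefinite_integral_continuous_1[OF a_int] by (rule continuous_on_subset) auto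
    show "((\<lambda>y. integral {0..y} (\<lambda>y. 1 / a y)) has_real_derivative 1 / a y) (at y)"
      if "y \<in> {0<..<min x0 1}" for y
    proof -
      have "isCont a y"
        using continuous_on_interior[OF a_cont, of y] that by simp
      then have "isCont (\<lambda>y. 1 / a y) y"
        using a_pos[of y] that by (auto intro!: continuous_intros)
      then show ?thesis
        using that by (intro has_real_derivative_indefinite_integral[OF a_int]) auto
    qed
    show "\<delta> \<le> 1 / a y * v s y" if "s \<in> {0..<T}" "y \<in> {0<..<min x0 1}" for s y
      using v_eq[OF that(1)] a_pos[of y] w_ge[OF that(1), of y] that by simp
  qed (use \<open>0 < x0\<close> a_pos that in auto)

qed


lemma xc_threshold:
  assumes t: "t \<in> {0..<T}" and "0 < x1" and pos: "\<And>x. x \<in> {0<..<x1} \<Longrightarrow> 0 < csigma Sig t x"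
  shows "{x. x > 0 \<and> csigma Sig t x = 0} \<noteq> {}" "0 < xc Sig t"
    "\<And>x. x \<in> {0<..<xc Sig t} \<Longrightarrow> 0 < csigma Sig t x" "\<And>x. xc Sig t < x \<Longrightarrow> csigma Sig t x = 0"
proof -
  have large: "csigma Sig t (2 * exp (K * T)) = 0"
    using csigma_eq_0_large[OF t] .
  then show "{x. x > 0 \<and> csigma Sig t x = 0} \<noteq> {}"
    by (intro ex_in_conv[THEN iffD1]) (auto intro!: exI[of _ "2 * exp (K * T)"])
  note threshold = antimono_zero_threshold[of "csigma Sig t", OF csigma_antimono[OF t]
      csigma_nonneg[OF t] \<open>0 < x1\<close> pos _ large, folded xc_def]
  show "0 < xc Sig t"
    using threshold(1) \<open>0 < x1\<close> by simp
  show "\<And>x. x \<in> {0<..<xc Sig t} \<Longrightarrow> 0 < csigma Sig t x" "\<And>x. xc Sig t < x \<Longrightarrow> csigma Sig t x = 0"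
    using threshold(2,3) by simp_all
qed

lemma xc_initial_eq_0:
  assumes "0 < T"
  shows "xc Sig 0 = 0"
proof -
  have "{x. x > 0 \<and> csigma Sig 0 x = 0} = {0<..}"
    using csigma_initial_eq_0[OF assms] by auto
  then show ?thesis
    unfolding xc_def by simp
qed

end

section \<open>Fields of the form \<open>a(x) w(t, x)\<close>\<close>

lemma characteristic_flow_product:
  fixes a :: "real \<Rightarrow> real" and w :: "real \<Rightarrow> real \<Rightarrow> real"
  assumes "0 < K"
    and growth: "\<forall>t\<in>{0..<T}. \<forall>x>0. \<bar>v t x\<bar> \<le> K * (1 + x)"
    and v_eq: "\<forall>t\<in>{0..<T}. \<forall>x>0. v t x = a x * w t x"
    and deriv_bound: "\<forall>R>0. \<exists>M. \<forall>t\<in>{0<..<T}. \<forall>x>1/R. \<bar>deriv (\<lambda>y. v t y) x\<bar> \<le> M"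
    and a_cont: "continuous_on {0..} a" and a_diff: "\<forall>x>0. a differentiable (at x)"
    and w_cont: "continuous_on ({0..<T} \<times> {0..}) (\<lambda>(t, x). w t x)"
    and w_diff: "\<forall>t\<in>{0<..<T}. \<forall>x>0. (\<lambda>y. w t y) differentiable (at x)"
    and X_max: "\<forall>t\<in>{0..<T}. \<forall>x>0. max_char_sol v T t x (Sig t x) (\<lambda>s. X s t x)"
  shows "characteristic_flow v T K Sig X"
proof -
  have v_diff: "(\<lambda>y. v t y) differentiable (at z)" if "t \<in> {0<..<T}" "0 < z" for t z
  proof (rule differentiable_transform_within[OF _ \<open>0 < z\<close>])
    show "(\<lambda>y. a y * w t y) differentiable (at z)"
      using a_diff w_diff that by (simp add: differentiable_mult)
    show "a y * w t y = v t y" if "dist y z < z" for y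
      using v_eq \<open>t \<in> {0<..<T}\<close> that by (simp add: dist_real_def abs_less_iff)
  qed simp
  have "continuous_on ({0<..<T} \<times> {0<..}) (\<lambda>p. a (snd p))"
    by (rule continuous_on_compose2[OF a_cont continuous_on_snd]) auto
  moreover have "continuous_on ({0<..<T} \<times> {0<..}) (\<lambda>(t, x). w t x)"
    by (rule continuous_on_subset[OF w_cont]) auto
  ultimately have "continuous_on ({0<..<T} \<times> {0<..}) (\<lambda>(t, x). a x * w t x)"
    unfolding case_prod_beta by (rule continuous_on_mult)
  moreover have "(\<lambda>(t, x). a x * w t x) p = (\<lambda>(t, x). v t x) p" if "p \<in> {0<..<T} \<times> {0<..}" for p
    using v_eq that by auto
  ultimately have v_cont: "continuous_on ({0<..<T} \<times> {0<..}) (\<lambda>(t, x). v t x)"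
    using continuous_on_cong by blast
  show ?thesis
  proof
    show "\<bar>v t x\<bar> \<le> K * (1 + x)" if "t \<in> {0..<T}" "0 < x" for t x
      using growth that by blast
    show "\<exists>L\<ge>0. \<forall>t\<in>{0<..<T}. \<forall>x\<ge>r. \<forall>y\<ge>r. \<bar>v t x - v t y\<bar> \<le> L * \<bar>x - y\<bar>" if "0 < r" for r
      by (rule uniform_lipschitz_of_deriv_bound[OF v_diff deriv_bound that])
    show "max_char_sol v T t x (Sig t x) (\<lambda>s. X s t x)" if "t \<in> {0..<T}" "0 < x" for t x
      using X_max that by blast
  qed (use \<open>0 < K\<close> v_cont in auto)
qed

theorem mainTheorem7:
  fixes T K :: real
    and v w :: "real \<Rightarrow> real \<Rightarrow> real"
    and a :: "real \<Rightarrow> real"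
    and X :: "real \<Rightarrow> real \<Rightarrow> real \<Rightarrow> real"
    and Sig :: "real \<Rightarrow> real \<Rightarrow> real set"
  assumes T_pos: "T > 0"
    and v_def: "\<forall>t\<in>{0..<T}. \<forall>x>0. v t x = a x * w t x"
    and A1: "K > 0" "\<forall>t\<in>{0..<T}. \<forall>x>0. \<bar>v t x\<bar> \<le> K * (1 + x)"
    and A2: "\<forall>R>0. \<exists>M. \<forall>t\<in>{0<..<T}. \<forall>x>1/R. \<bar>deriv (\<lambda>y. v t y) x\<bar> \<le> M"
    and A3: "continuous_on {0..} a" "\<forall>x>0. a differentiable (at x)"
            "continuous_on {0<..} (deriv a)" "\<forall>x>0. a x > 0"
    and A4: "continuous_on ({0..<T} \<times> {0..}) (\<lambda>(t, x). w t x)"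
            "\<forall>t\<in>{0<..<T}. \<forall>x>0. (\<lambda>y. w t y) differentiable (at x)"
            "continuous_on ({0<..<T} \<times> {0<..}) (\<lambda>(t, x). deriv (\<lambda>y. w t y) x)"
            "\<forall>R>0. \<exists>M. \<forall>t\<in>{0<..<T}. \<forall>x\<in>{1/R<..<R}. \<bar>deriv (\<lambda>y. w t y) x\<bar> \<le> M"
    and A5: "(\<lambda>y. 1 / a y) absolutely_integrable_on {0<..<1}"
            "filterlim (\<lambda>x. integral {0..x} (\<lambda>y. 1 / a y)) at_top at_top"
    and A6: "(\<lambda>(t, x). deriv (\<lambda>y. w t y) x) absolutely_integrable_on ({0<..<T} \<times> {0<..<1})"
    and A7: "\<exists>\<delta>>0. \<exists>x0>0. \<forall>t\<in>{0..<T}. \<forall>x\<in>{0<..<x0}. w t x \<ge> \<delta>"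
    and X_max: "\<forall>t\<in>{0..<T}. \<forall>x>0. max_char_sol v T t x (Sig t x) (\<lambda>s. X s t x)"
  shows "(\<forall>t\<in>{0<..<T}.
            {x. x > 0 \<and> csigma Sig t x = 0} \<noteq> {} \<and> xc Sig t > 0 \<and>
            (\<forall>x y. 0 < x \<and> x \<le> y \<longrightarrow> csigma Sig t y \<le> csigma Sig t x) \<and>
            (\<forall>x\<in>{0<..<xc Sig t}. csigma Sig t x > 0) \<and>
            (\<forall>x>xc Sig t. csigma Sig t x = 0))
         \<and> xc Sig 0 = 0 \<and> (\<forall>x>0. csigma Sig 0 x = 0)"
proof -
  interpret characteristic_flow v T K Sig X
    by (rule characteristic_flow_product[OF A1 v_def A2 A3(1,2) A4(1,2) X_max])
  obtain \<delta> x0 where "0 < \<delta>" "0 < x0" and w_ge: "\<And>t x. t \<in> {0..<T} \<Longrightarrow> x \<in> {0<..<x0} \<Longrightarrow> \<delta> \<le> w t x"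
    using A7 by blast
  have "{x. x > 0 \<and> csigma Sig t x = 0} \<noteq> {} \<and> xc Sig t > 0 \<and>
      (\<forall>x y. 0 < x \<and> x \<le> y \<longrightarrow> csigma Sig t y \<le> csigma Sig t x) \<and>
      (\<forall>x\<in>{0<..<xc Sig t}. csigma Sig t x > 0) \<and> (\<forall>x>xc Sig t. csigma Sig t x = 0)"
    if t: "t \<in> {0<..<T}" for t
  proof -
    obtain x1 where "0 < x1" "\<And>x. x \<in> {0<..<x1} \<Longrightarrow> 0 < csigma Sig t x"
      using csigma_pos_near_zero_product[OF t v_def[rule_format] A3(1) A3(4)[rule_format] A5(1)
          \<open>0 < \<delta>\<close> \<open>0 < x0\<close> w_ge] by blast
    moreover have "t \<in> {0..<T}"
      using t by simp
    ultimately show ?thesis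
      using xc_threshold csigma_antimono by blast
  qed
  then show ?thesis
    using xc_initial_eq_0[OF T_pos] csigma_initial_eq_0[OF T_pos] by blast
qed

end
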